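(* Let $A$ be a prime unital alternative $*$-algebra over $\mathbb{C}$ with unit $1_A$, and let $n\ge2$ be a fixed integer. Assume that $A$ contains a nontrivial symmetric idempotent $e$ (i.e. $e^2=e=e^*$, $e\neq0$, $e\neq 1_A$). If a (not necessarily additive) map $\Phi:A\to A$ satisfies $$\Phi(a_1\bullet a_2\bullet\cdots\bullet a_n)=\sum_{k=1}^{n} a_1\bullet\cdots\bullet a_{k-1}\bullet\Phi(a_k)\bullet a_{k+1}\bullet\cdots\bullet a_n$$ for all $a_{n-1},a_n\in A$ and $a_i=1_A$ for all $i\in\{1,\dots,n-2\}$, then $\Phi$ is an additive $*$-derivation.
   Context: An algebra $A$ (not necessarily associative) is alternative if $a^2b=a(ab)$ and $ba^2=(ba)a$ for all $a,b\in A$; it is prime if whenever $a,b\in A$ satisfy $aAb=0$ (i.e. $(ax)b=0$ for all $x\in A$), then $a=0$ or $b=0$. An involution on $A$ is a map $*:A\to A$ with $(x+y)^*=x^*+y^*$, $(x^* )^*=x$, $(xy)^*=y^*x^*$. For $a,b\in A$ let $a\bullet b=ab+ba^*$, with left-normed iteration $a_1\bullet\cdots\bullet a_n=(\cdots((a_1\bullet a_2)\bullet a_3)\cdots)\bullet a_n$. A map $\Phi$ is an additive $*$-derivation if it is additive, $\Phi(ab)=\Phi(a)b+a\Phi(b)$ and $\Phi(a^* )=\Phi(a)^*$ for all $a,b\in A$. *)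

theory Defs
  imports Complex_Main
begin

definition complex_algebra :: "(complex \<Rightarrow> 'a::ab_group_add \<Rightarrow> 'a) \<Rightarrow> ('a \<Rightarrow> 'a \<Rightarrow> 'a) \<Rightarrow> bool" where
  "complex_algebra scl mul \<longleftrightarrow>
     Vector_Spaces.vector_space scl \<and>
     (\<forall>x y z. mul (x + y) z = mul x z + mul y z) \<and>
     (\<forall>x y z. mul x (y + z) = mul x y + mul x z) \<and>
     (\<forall>c x y. mul (scl c x) y = scl c (mul x y)) \<and>
     (\<forall>c x y. mul x (scl c y) = scl c (mul x y))"

definition alternative :: "('a \<Rightarrow> 'a \<Rightarrow> 'a) \<Rightarrow> bool" where
  "alternative mul \<longleftrightarrow>
     (\<forall>a b. mul (mul a a) b = mul a (mul a b)) \<and>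
     (\<forall>a b. mul b (mul a a) = mul (mul b a) a)"

definition prime_algebra :: "('a::zero \<Rightarrow> 'a \<Rightarrow> 'a) \<Rightarrow> bool" where
  "prime_algebra mul \<longleftrightarrow>
     (\<forall>a b. (\<forall>x. mul (mul a x) b = 0) \<longrightarrow> a = 0 \<or> b = 0)"

definition unit_of :: "('a \<Rightarrow> 'a \<Rightarrow> 'a) \<Rightarrow> 'a \<Rightarrow> bool" where
  "unit_of mul u \<longleftrightarrow> (\<forall>x. mul u x = x \<and> mul x u = x)"

definition involution :: "('a::plus \<Rightarrow> 'a \<Rightarrow> 'a) \<Rightarrow> ('a \<Rightarrow> 'a) \<Rightarrow> bool" where
  "involution mul st \<longleftrightarrow>
     (\<forall>x y. st (x + y) = st x + st y) \<and>
     (\<forall>x. st (st x) = x) \<and>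
     (\<forall>x y. st (mul x y) = mul (st y) (st x))"

definition complex_star_algebra ::
  "(complex \<Rightarrow> 'a::ab_group_add \<Rightarrow> 'a) \<Rightarrow> ('a \<Rightarrow> 'a \<Rightarrow> 'a) \<Rightarrow> ('a \<Rightarrow> 'a) \<Rightarrow> bool" where
  "complex_star_algebra scl mul st \<longleftrightarrow>
     complex_algebra scl mul \<and> involution mul st \<and>
     (\<forall>c x. st (scl c x) = scl (cnj c) (st x))"

definition jbullet :: "('a::plus \<Rightarrow> 'a \<Rightarrow> 'a) \<Rightarrow> ('a \<Rightarrow> 'a) \<Rightarrow> 'a \<Rightarrow> 'a \<Rightarrow> 'a" where
  "jbullet mul st a b = mul a b + mul b (st a)"

text \<open>Left-normed iteration a_1 \<bullet> a_2 \<bullet> ... \<bullet> a_n of a nonempty list.\<close>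

definition jbullet_list :: "('a::plus \<Rightarrow> 'a \<Rightarrow> 'a) \<Rightarrow> ('a \<Rightarrow> 'a) \<Rightarrow> 'a list \<Rightarrow> 'a" where
  "jbullet_list mul st xs = foldl (jbullet mul st) (hd xs) (tl xs)"

definition star_derivation ::
  "('a::plus \<Rightarrow> 'a \<Rightarrow> 'a) \<Rightarrow> ('a \<Rightarrow> 'a) \<Rightarrow> ('a \<Rightarrow> 'a) \<Rightarrow> bool" where
  "star_derivation mul st \<Phi> \<longleftrightarrow>
     (\<forall>a b. \<Phi> (a + b) = \<Phi> a + \<Phi> b) \<and>
     (\<forall>a b. \<Phi> (mul a b) = mul (\<Phi> a) b + mul a (\<Phi> b)) \<and>
     (\<forall>a. \<Phi> (st a) = st (\<Phi> a))"

end

theory Submission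
  imports Defs
begin

text \<open>With its first \<open>n - 2\<close> factors equal to the unit, the product \<open>a\<^sub>1 \<bullet> \<dots> \<bullet> a\<^sub>n\<close> is
  \<open>2\<^sup>n\<^sup>-\<^sup>2 (a \<bullet> b)\<close>, and the hypothesis becomes
  \<open>\<Phi> (M (a \<bullet> b)) = M (\<Phi> a \<bullet> b + a \<bullet> \<Phi> b) + (W \<bullet> a) \<bullet> b\<close> with \<open>M = 2\<^sup>n\<^sup>-\<^sup>2\<close> and \<open>W\<close> built
  from \<open>\<Phi> 1\<close>. The last term is biadditive, so the additivity defect
  \<open>\<Phi> (x + y) - \<Phi> x - \<Phi> y\<close> is compatible with \<open>\<bullet>\<close>. Testing it against the Peirce
  decomposition with respect to \<open>e\<close>, and using primeness, shows that \<open>\<Phi>\<close> is additive.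
  Then \<open>\<Phi> 1\<close> is skew and annihilated by \<open>\<bullet>\<close>, which kills \<open>W\<close>, so \<open>\<Phi>\<close> is a derivation
  of \<open>\<bullet>\<close>. Now \<open>\<Phi> 1\<close> and \<open>w = \<Phi> (\<i> 1) - \<i> \<Phi> 1\<close> are central, \<open>\<Phi> (\<i> u) = \<i> \<Phi> u + w u\<^sup>*\<close>, and
  the Peirce decomposition together with primeness forces \<open>w = 0\<close>, hence \<open>\<Phi> 1 = 0\<close>.
  So \<open>\<Phi>\<close> commutes with \<open>*\<close> and with \<open>\<i>\<close>, and it is a derivation because
  \<open>2 x y = x \<bullet> y - \<i> ((\<i> x) \<bullet> y)\<close>.\<close>

section \<open>Alternative star-algebras\<close>

locale alternative_star_algebra =
  fixes scl :: "complex \<Rightarrow> 'a::ab_group_add \<Rightarrow> 'a"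
    and mul :: "'a \<Rightarrow> 'a \<Rightarrow> 'a" (infixl "\<odot>" 70)
    and st :: "'a \<Rightarrow> 'a"
    and one :: 'a
  assumes vector_space: "Vector_Spaces.vector_space scl"
    and mul_add_left: "(x + y) \<odot> z = x \<odot> z + y \<odot> z"
    and mul_add_right: "x \<odot> (y + z) = x \<odot> y + x \<odot> z"
    and mul_scl_left: "scl c x \<odot> y = scl c (x \<odot> y)"
    and mul_scl_right: "x \<odot> scl c y = scl c (x \<odot> y)"
    and st_add: "st (x + y) = st x + st y"
    and st_st [simp]: "st (st x) = x"
    and st_mul: "st (x \<odot> y) = st y \<odot> st x"
    and st_scl: "st (scl c x) = scl (cnj c) (st x)"
    and one_mul [simp]: "one \<odot> x = x"
    and mul_one [simp]: "x \<odot> one = x"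
    and alt_left: "(x \<odot> x) \<odot> y = x \<odot> (x \<odot> y)"
    and alt_right: "y \<odot> (x \<odot> x) = (y \<odot> x) \<odot> x"

locale prime_alternative_star_algebra = alternative_star_algebra +
  assumes prime: "(\<And>x. (a \<odot> x) \<odot> b = 0) \<Longrightarrow> a = 0 \<or> b = 0"

lemma prime_alternative_star_algebraI:
  assumes "complex_star_algebra scl mul st" "alternative mul" "prime_algebra mul" "unit_of mul one"
  shows "prime_alternative_star_algebra scl mul st one"
  using assms
  unfolding prime_alternative_star_algebra_def prime_alternative_star_algebra_axioms_def alternative_star_algebra_def
    complex_star_algebra_def complex_algebra_def involution_def alternative_def prime_algebra_def
    unit_of_def
  by auto

sublocale alternative_star_algebra \<subseteq> V: vector_space scl
  by (rule vector_space)

context alternative_star_algebra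
begin

lemma mul_zero_left [simp]: "0 \<odot> x = 0"
  using mul_add_left [of 0 0 x] by simp

lemma mul_zero_right [simp]: "x \<odot> 0 = 0"
  using mul_add_right [of x 0 0] by simp

lemma mul_minus_left [simp]: "- x \<odot> y = - (x \<odot> y)"
  using mul_add_left [of "- x" x y] by (simp add: eq_neg_iff_add_eq_0)

lemma mul_minus_right [simp]: "x \<odot> - y = - (x \<odot> y)"
  using mul_add_right [of x "- y" y] by (simp add: eq_neg_iff_add_eq_0)

lemma mul_diff_left [simp]: "(x - y) \<odot> z = x \<odot> z - y \<odot> z"
  using mul_add_left [of x "- y" z] by simp

lemma mul_diff_right [simp]: "x \<odot> (y - z) = x \<odot> y - x \<odot> z"
  using mul_add_right [of x y "- z"] by simp

lemma st_zero [simp]: "st 0 = 0"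
  using st_add [of 0 0] by simp

lemma st_minus [simp]: "st (- x) = - st x"
  using st_add [of "- x" x] by (simp add: eq_neg_iff_add_eq_0)

lemma st_diff [simp]: "st (x - y) = st x - st y"
  using st_add [of x "- y"] by simp

lemma st_one [simp]: "st one = one"
  using st_mul [of "st one" one] by simp

lemma double_eq_0:
  assumes "(x::'a) + x = 0"
  shows "x = 0"
proof -
  from assms have "scl (1/2 + 1/2) x = 0"
    by (metis V.scale_left_distrib V.scale_right_distrib V.scale_zero_right)
  then show ?thesis
    by simp
qed

lemma double_cancel: "(x::'a) + x = y + y \<Longrightarrow> x = y"
  using double_eq_0 [of "x - y"] by (simp add: algebra_simps)

lemma triple_eq_0:
  assumes "(x::'a) + x + x = 0"
  shows "x = 0"
proof -
  from assms have "scl (1/3 + 1/3 + 1/3) x = 0"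
    by (metis V.scale_left_distrib V.scale_right_distrib V.scale_zero_right)
  then show ?thesis
    by simp
qed

abbreviation bullet :: "'a \<Rightarrow> 'a \<Rightarrow> 'a" (infixl "\<bullet>" 70)
  where "a \<bullet> b \<equiv> jbullet (\<odot>) st a b"

lemma bullet_eq: "a \<bullet> b = a \<odot> b + b \<odot> st a"
  by (simp add: jbullet_def)

lemma bullet_add_left: "(x + y) \<bullet> b = x \<bullet> b + y \<bullet> b"
  by (simp add: bullet_eq mul_add_left mul_add_right st_add algebra_simps)

lemma bullet_add_right: "a \<bullet> (x + y) = a \<bullet> x + a \<bullet> y"
  by (simp add: bullet_eq mul_add_left mul_add_right algebra_simps)

lemma bullet_zero_left [simp]: "0 \<bullet> b = 0"
  by (simp add: bullet_eq)

lemma bullet_zero_right [simp]: "a \<bullet> 0 = 0"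
  by (simp add: bullet_eq)

lemma bullet_diff_left: "(x - y) \<bullet> b = x \<bullet> b - y \<bullet> b"
  by (simp add: bullet_eq algebra_simps)

lemma bullet_diff_right: "a \<bullet> (x - y) = a \<bullet> x - a \<bullet> y"
  by (simp add: bullet_eq algebra_simps)

lemma bullet_real_scl_left: "cnj c = c \<Longrightarrow> scl c x \<bullet> b = scl c (x \<bullet> b)"
  by (simp add: bullet_eq mul_scl_left mul_scl_right st_scl V.scale_right_distrib)

lemma one_bullet: "one \<bullet> x = x + x"
  by (simp add: bullet_eq)

lemma bullet_one: "x \<bullet> one = x + st x"
  by (simp add: bullet_eq)

definition associator :: "'a \<Rightarrow> 'a \<Rightarrow> 'a \<Rightarrow> 'a"
  where "associator x y z = (x \<odot> y) \<odot> z - x \<odot> (y \<odot> z)"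

lemma associator_swap12: "associator x y z = - associator y x z"
proof -
  have "(x \<odot> y) \<odot> z + (y \<odot> x) \<odot> z = x \<odot> (y \<odot> z) + y \<odot> (x \<odot> z)"
    using alt_left [of "x + y" z] alt_left [of x z] alt_left [of y z]
    by (simp add: mul_add_left mul_add_right algebra_simps)
  then show ?thesis
    unfolding associator_def by (simp add: algebra_simps)
qed

lemma associator_swap23: "associator x y z = - associator x z y"
proof -
  have "x \<odot> (y \<odot> z) + x \<odot> (z \<odot> y) = (x \<odot> y) \<odot> z + (x \<odot> z) \<odot> y"
    using alt_right [of x "y + z"] alt_right [of x y] alt_right [of x z]
    by (simp add: mul_add_left mul_add_right algebra_simps)
  then show ?thesis
    unfolding associator_def by (simp add: algebra_simps)
qed

lemma flexible: "(x \<odot> y) \<odot> x = x \<odot> (y \<odot> x)"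
  using associator_swap23 [of x y x] alt_left [of x y] unfolding associator_def by simp

lemma alt_left_linearized: "p \<odot> (x \<odot> y) = (p \<odot> x) \<odot> y + (x \<odot> p) \<odot> y - x \<odot> (p \<odot> y)"
  using associator_swap12 [of p x y] unfolding associator_def by (simp add: algebra_simps)

lemma alt_right_linearized: "(x \<odot> y) \<odot> p = x \<odot> (y \<odot> p) - (x \<odot> p) \<odot> y + x \<odot> (p \<odot> y)"
  using associator_swap23 [of x y p] unfolding associator_def by (simp add: algebra_simps)

lemma central_assoc:
  assumes central: "\<And>y. c \<odot> y = y \<odot> c"
  shows "(x \<odot> y) \<odot> c = x \<odot> (y \<odot> c)" and "(x \<odot> c) \<odot> y = x \<odot> (c \<odot> y)"
    and "(c \<odot> x) \<odot> y = c \<odot> (x \<odot> y)"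
proof -
  have swapped: "associator x c y = - associator x y c" "associator c x y = associator x y c"
    using associator_swap12 [of c x y] associator_swap23 [of x c y] by simp_all
  have "associator x y c - associator x c y + associator c x y = 0"
    using central [of "x \<odot> y"] central [of x] central [of y]
    unfolding associator_def by (simp add: algebra_simps)
  then have "associator x y c + associator x y c + associator x y c = 0"
    unfolding swapped by simp
  then have "associator x y c = 0"
    by (rule triple_eq_0)
  with swapped show "(x \<odot> y) \<odot> c = x \<odot> (y \<odot> c)" "(x \<odot> c) \<odot> y = x \<odot> (c \<odot> y)"
    "(c \<odot> x) \<odot> y = c \<odot> (x \<odot> y)"
    unfolding associator_def by simp_all
qed

lemma bullet_annihilator:
  assumes "\<And>x. z \<bullet> x = 0"
  shows "st z = - z" and "z \<odot> x = x \<odot> z"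
proof -
  show skew: "st z = - z"
    using assms [of one] by (simp add: bullet_one eq_neg_iff_add_eq_0 add.commute)
  show "z \<odot> x = x \<odot> z"
    using assms [of x] by (simp add: bullet_eq skew)
qed

lemma central_st:
  assumes "\<And>y. c \<odot> y = y \<odot> c"
  shows "st c \<odot> x = x \<odot> st c"
  using assms [of "st x"] st_mul [of "st x" c] st_mul [of c "st x"] by simp

end


section \<open>Peirce decomposition\<close>

locale peirce = alternative_star_algebra +
  fixes p :: 'a
  assumes p_idem: "p \<odot> p = p"
    and st_p: "st p = p"
begin

definition A11 :: "'a \<Rightarrow> bool" where "A11 x \<longleftrightarrow> p \<odot> x = x \<and> x \<odot> p = x"
definition A12 :: "'a \<Rightarrow> bool" where "A12 x \<longleftrightarrow> p \<odot> x = x \<and> x \<odot> p = 0"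
definition A21 :: "'a \<Rightarrow> bool" where "A21 x \<longleftrightarrow> p \<odot> x = 0 \<and> x \<odot> p = x"
definition A22 :: "'a \<Rightarrow> bool" where "A22 x \<longleftrightarrow> p \<odot> x = 0 \<and> x \<odot> p = 0"

lemmas A_defs = A11_def A12_def A21_def A22_def

definition proj11 :: "'a \<Rightarrow> 'a" where "proj11 x = (p \<odot> x) \<odot> p"
definition proj12 :: "'a \<Rightarrow> 'a" where "proj12 x = p \<odot> x - (p \<odot> x) \<odot> p"
definition proj21 :: "'a \<Rightarrow> 'a" where "proj21 x = x \<odot> p - (p \<odot> x) \<odot> p"
definition proj22 :: "'a \<Rightarrow> 'a" where "proj22 x = x - p \<odot> x - x \<odot> p + (p \<odot> x) \<odot> p"

lemmas proj_defs = proj11_def proj12_def proj21_def proj22_def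

lemma p_mul_p_mul [simp]: "p \<odot> (p \<odot> x) = p \<odot> x"
  using alt_left [of p x] p_idem by simp

lemma mul_p_mul_p [simp]: "(x \<odot> p) \<odot> p = x \<odot> p"
  using alt_right [of x p] p_idem by simp

lemma p_mul_mul_p [simp]: "p \<odot> (x \<odot> p) = (p \<odot> x) \<odot> p"
  by (rule flexible [symmetric])

lemma A11_proj11: "A11 (proj11 x)"
  and A12_proj12: "A12 (proj12 x)"
  and A21_proj21: "A21 (proj21 x)"
  and A22_proj22: "A22 (proj22 x)"
  by (simp_all add: A_defs proj_defs mul_add_left mul_add_right)

lemma proj_sum: "proj11 x + proj12 x + proj21 x + proj22 x = x"
  by (simp add: proj_defs algebra_simps)

lemma proj_add:
  "proj11 (x + y) = proj11 x + proj11 y" "proj12 (x + y) = proj12 x + proj12 y"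
  "proj21 (x + y) = proj21 x + proj21 y" "proj22 (x + y) = proj22 x + proj22 y"
  by (simp_all add: proj_defs mul_add_left mul_add_right algebra_simps)

lemma proj_scl: "proj12 (scl c x) = scl c (proj12 x)"
  by (simp add: proj_defs mul_scl_left mul_scl_right V.scale_right_diff_distrib)

lemma proj_A11: "A11 x \<Longrightarrow> proj11 x = x \<and> proj12 x = 0 \<and> proj21 x = 0 \<and> proj22 x = 0"
  and proj_A12: "A12 x \<Longrightarrow> proj11 x = 0 \<and> proj12 x = x \<and> proj21 x = 0 \<and> proj22 x = 0"
  and proj_A21: "A21 x \<Longrightarrow> proj11 x = 0 \<and> proj12 x = 0 \<and> proj21 x = x \<and> proj22 x = 0"
  and proj_A22: "A22 x \<Longrightarrow> proj11 x = 0 \<and> proj12 x = 0 \<and> proj21 x = 0 \<and> proj22 x = x"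
  by (simp_all add: A_defs proj_defs)

lemma A12_A21_sum_eq_0: "A12 x \<Longrightarrow> A21 y \<Longrightarrow> x + y = 0 \<Longrightarrow> x = 0 \<and> y = 0"
  unfolding A12_def A21_def using mul_add_right [of p x y] by auto

lemma A_scl:
  "A11 x \<Longrightarrow> A11 (scl c x)" "A12 x \<Longrightarrow> A12 (scl c x)"
  "A21 x \<Longrightarrow> A21 (scl c x)" "A22 x \<Longrightarrow> A22 (scl c x)"
  by (simp_all add: A_defs mul_scl_left mul_scl_right)

lemma A_add:
  "A11 x \<Longrightarrow> A11 y \<Longrightarrow> A11 (x + y)" "A12 x \<Longrightarrow> A12 y \<Longrightarrow> A12 (x + y)"
  "A21 x \<Longrightarrow> A21 y \<Longrightarrow> A21 (x + y)" "A22 x \<Longrightarrow> A22 y \<Longrightarrow> A22 (x + y)"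
  by (simp_all add: A_defs mul_add_left mul_add_right)

lemma A_zero [simp]: "A11 0" "A12 0" "A21 0" "A22 0"
  by (simp_all add: A_defs)

lemma A_st:
  "A11 x \<Longrightarrow> A11 (st x)" "A12 x \<Longrightarrow> A21 (st x)" "A21 x \<Longrightarrow> A12 (st x)" "A22 x \<Longrightarrow> A22 (st x)"
  unfolding A_defs using st_mul [of x p] st_mul [of p x] st_p by auto

lemma A11_p: "A11 p"
  by (simp add: A11_def p_idem)

lemma A12_mul_A12: "A12 x \<Longrightarrow> A12 y \<Longrightarrow> A21 (x \<odot> y)"
  and A12_mul_A21: "A12 x \<Longrightarrow> A21 y \<Longrightarrow> A11 (x \<odot> y)"
  and A21_mul_A11: "A21 x \<Longrightarrow> A11 y \<Longrightarrow> A21 (x \<odot> y)"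
  and A11_mul_A12: "A11 x \<Longrightarrow> A12 y \<Longrightarrow> A12 (x \<odot> y)"
  and A11_mul_A11: "A11 x \<Longrightarrow> A11 y \<Longrightarrow> A11 (x \<odot> y)"
  unfolding A_defs using alt_left_linearized [of p x y] alt_right_linearized [of x y p] by simp_all

lemma A11_mul_A21: "A11 x \<Longrightarrow> A21 y \<Longrightarrow> x \<odot> y = 0"
  and A11_mul_A22: "A11 x \<Longrightarrow> A22 y \<Longrightarrow> x \<odot> y = 0"
  and A12_mul_A11: "A12 x \<Longrightarrow> A11 y \<Longrightarrow> x \<odot> y = 0"
proof -
  have left: "z = 0" if "p \<odot> z = z + z" for z
  proof (rule double_eq_0)
    show "z + z = 0"
      using p_mul_p_mul [of z] that by (simp add: mul_add_right)
  qed
  have right: "z = 0" if "z \<odot> p = z + z" for z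
  proof (rule double_eq_0)
    show "z + z = 0"
      using mul_p_mul_p [of z] that by (simp add: mul_add_left)
  qed
  show "A11 x \<Longrightarrow> A21 y \<Longrightarrow> x \<odot> y = 0" "A11 x \<Longrightarrow> A22 y \<Longrightarrow> x \<odot> y = 0"
    unfolding A_defs using alt_left_linearized [of p x y] by (auto intro: left)
  show "A12 x \<Longrightarrow> A11 y \<Longrightarrow> x \<odot> y = 0"
    unfolding A_defs using alt_right_linearized [of x y p] by (auto intro: right)
qed

lemma bullet_p:
  "A11 x \<Longrightarrow> p \<bullet> x = x + x" "A12 x \<Longrightarrow> p \<bullet> x = x"
  "A21 x \<Longrightarrow> p \<bullet> x = x" "A22 x \<Longrightarrow> p \<bullet> x = 0"
  by (simp_all add: A_defs bullet_eq st_p)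

lemma bullet_one_minus_p:
  "A11 x \<Longrightarrow> (one - p) \<bullet> x = 0" "A12 x \<Longrightarrow> (one - p) \<bullet> x = x"
  "A21 x \<Longrightarrow> (one - p) \<bullet> x = x" "A22 x \<Longrightarrow> (one - p) \<bullet> x = x + x"
  by (simp_all add: A_defs bullet_eq st_p)

lemma bullet_i_p:
  "A11 x \<Longrightarrow> scl \<i> p \<bullet> x = 0" "A12 x \<Longrightarrow> scl \<i> p \<bullet> x = scl \<i> x"
  "A21 x \<Longrightarrow> scl \<i> p \<bullet> x = - scl \<i> x" "A22 x \<Longrightarrow> scl \<i> p \<bullet> x = 0"
  by (simp_all add: A_defs bullet_eq st_p st_scl mul_scl_left mul_scl_right)

lemma A12_bullet_p: "A12 x \<Longrightarrow> x \<bullet> p = 0"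
  using A_st(2) [of x] by (simp add: A_defs bullet_eq st_p)

lemma A21_bullet_one_minus_p: "A21 x \<Longrightarrow> x \<bullet> (one - p) = 0"
  using A_st(3) [of x] by (simp add: A_defs bullet_eq)

lemma proj12_mul_p: "proj12 (y \<odot> p) = 0"
  by (simp add: proj12_def)

lemma proj12_A12_mul_mul_p:
  assumes a: "A12 a"
  shows "proj12 (a \<odot> (y \<odot> p)) = 0"
proof -
  have "a \<odot> (p \<odot> (y \<odot> p)) = 0"
    using A12_mul_A11 [OF a A11_proj11 [of y]] by (simp add: proj11_def)
  then have "p \<odot> (a \<odot> (y \<odot> p)) = a \<odot> (y \<odot> p)" and "(a \<odot> (y \<odot> p)) \<odot> p = a \<odot> (y \<odot> p)"
    using alt_left_linearized [of p a "y \<odot> p"] alt_right_linearized [of a "y \<odot> p" p] a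
    by (simp_all add: A12_def)
  then show ?thesis
    by (simp add: proj12_def)
qed

lemma proj12_A12_mul_p_mul:
  assumes "A12 a"
  shows "proj12 (a \<odot> (p \<odot> y)) = 0"
proof -
  have "p \<odot> (a \<odot> (p \<odot> y)) = 0"
    using alt_left_linearized [of p a "p \<odot> y"] assms by (simp add: A12_def)
  then show ?thesis
    by (simp add: proj12_def)
qed

lemma central_mul_A12:
  assumes c: "\<And>y. c \<odot> y = y \<odot> c" and a: "A12 a"
  shows "A12 (c \<odot> a)"
  using central_assoc [OF c, of p a] central_assoc [OF c, of a p] c [of p] a by (simp add: A12_def)

lemma central_mul_A21:
  assumes c: "\<And>y. c \<odot> y = y \<odot> c" and a: "A21 a"
  shows "A21 (c \<odot> a)"
  using central_assoc [OF c, of p a] central_assoc [OF c, of a p] c [of p] a by (simp add: A21_def)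

lemma A11_if_bullet_one_minus_p_eq_0:
  assumes "(one - p) \<bullet> x = 0"
  shows "A11 x"
proof -
  have sum: "p \<odot> x + x \<odot> p = x + x"
    using assms by (simp add: bullet_eq st_p algebra_simps)
  have "p \<odot> (p \<odot> x + x \<odot> p) = p \<odot> (x + x)" and "(p \<odot> x + x \<odot> p) \<odot> p = (x + x) \<odot> p"
    by (simp_all only: sum)
  then have "(p \<odot> x) \<odot> p = p \<odot> x" and "(p \<odot> x) \<odot> p = x \<odot> p"
    by (simp_all add: mul_add_left mul_add_right)
  then have "p \<odot> x = x \<odot> p"
    by (rule trans [OF sym])
  with sum have "p \<odot> x + p \<odot> x = x + x"
    by simp
  then have "p \<odot> x = x"
    by (rule double_cancel)
  with \<open>p \<odot> x = x \<odot> p\<close> show ?thesis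
    by (simp add: A11_def)
qed

lemma A12_if_bullet:
  assumes "p \<bullet> x = (one - p) \<bullet> x" and "x \<bullet> p = 0"
  shows "A12 x"
proof -
  have sum: "p \<odot> x + x \<odot> p = x"
    using assms(1) double_cancel [of "p \<odot> x + x \<odot> p" x] by (simp add: bullet_eq st_p algebra_simps)
  have "p \<odot> (p \<odot> x + x \<odot> p) = p \<odot> x"
    by (simp only: sum)
  then have "(p \<odot> x) \<odot> p = 0"
    by (simp add: mul_add_right)
  moreover have "st ((p \<odot> x) \<odot> p) = (p \<odot> st x) \<odot> p"
    by (simp add: st_mul st_p)
  ultimately have "(p \<odot> st x) \<odot> p = 0"
    by simp
  moreover have "(x \<odot> p + p \<odot> st x) \<odot> p = 0"
    using assms(2) by (simp add: bullet_eq st_p)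
  ultimately have "x \<odot> p = 0"
    by (simp add: mul_add_left)
  with sum show ?thesis
    by (simp add: A12_def)
qed

lemma bullet_i_p_eq_0:
  assumes "x \<bullet> p = 0" and "x \<bullet> (one - p) = 0"
  shows "scl \<i> p \<bullet> x = 0"
proof -
  have "x + st x = 0"
    using assms bullet_diff_right [of x one p] by (simp add: bullet_one)
  then have "st x = - x"
    by (simp add: eq_neg_iff_add_eq_0 add.commute)
  with assms(1) show ?thesis
    by (simp add: bullet_eq st_p st_scl mul_scl_left mul_scl_right)
qed

lemma eq_0_if_bullet_p_one_minus_p:
  assumes "(p - (one - p)) \<bullet> x = 0" and "scl \<i> p \<bullet> x = 0"
  shows "x = 0"
proof -
  have comm: "p \<odot> x = x \<odot> p"
    using assms(2) by (simp add: bullet_eq st_p st_scl mul_scl_left mul_scl_right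
        V.scale_right_diff_distrib [symmetric])
  have "(p \<odot> x + p \<odot> x) + (p \<odot> x + p \<odot> x) = x + x"
    using assms(1) comm by (simp add: bullet_eq st_p st_add mul_add_left mul_add_right algebra_simps)
  then have double: "p \<odot> x + p \<odot> x = x"
    by (rule double_cancel)
  have "p \<odot> (p \<odot> x + p \<odot> x) = p \<odot> x"
    by (simp only: double)
  then have "p \<odot> x + p \<odot> x = p \<odot> x"
    by (simp add: mul_add_right)
  with double show ?thesis
    by simp
qed

lemma peirce_one_minus_p: "peirce scl (\<odot>) st one (one - p)"
  by unfold_locales (simp_all add: p_idem st_p)

lemma peirce_one_minus_p_iff:
  "peirce.A11 (\<odot>) (one - p) x \<longleftrightarrow> A22 x" "peirce.A12 (\<odot>) (one - p) x \<longleftrightarrow> A21 x"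
  "peirce.A21 (\<odot>) (one - p) x \<longleftrightarrow> A12 x" "peirce.A22 (\<odot>) (one - p) x \<longleftrightarrow> A11 x"
  unfolding peirce.A_defs [OF peirce_one_minus_p] A_defs by auto

end


section \<open>Additivity\<close>

locale twisted_bullet_derivation = alternative_star_algebra +
  fixes \<Phi> :: "'a \<Rightarrow> 'a" and M :: complex and W :: 'a
  assumes M_nonzero: "M \<noteq> 0"
    and twisted_rule: "\<Phi> (scl M (a \<bullet> b)) = scl M (\<Phi> a \<bullet> b) + scl M (a \<bullet> \<Phi> b) + (W \<bullet> a) \<bullet> b"
begin

definition defect :: "'a \<Rightarrow> 'a \<Rightarrow> 'a"
  where "defect x y = \<Phi> (x + y) - \<Phi> x - \<Phi> y"

lemma defect_eq_0_iff: "defect x y = 0 \<longleftrightarrow> \<Phi> (x + y) = \<Phi> x + \<Phi> y"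
  by (simp add: defect_def diff_diff_eq)

lemma defect_commute: "defect x y = defect y x"
  unfolding defect_def by (simp add: add.commute diff_diff_eq)

lemma Phi_zero [simp]: "\<Phi> 0 = 0"
  using twisted_rule [of 0 0] by simp

lemma defect_zero [simp]: "defect x 0 = 0" "defect 0 y = 0"
  by (simp_all add: defect_def)

lemma defect_bullet_right: "defect (scl M (c \<bullet> x)) (scl M (c \<bullet> y)) = scl M (c \<bullet> defect x y)"
proof -
  have sum: "\<Phi> (scl M (c \<bullet> x) + scl M (c \<bullet> y)) = scl M (\<Phi> c \<bullet> x) + scl M (\<Phi> c \<bullet> y)
      + scl M (c \<bullet> \<Phi> (x + y)) + ((W \<bullet> c) \<bullet> x + (W \<bullet> c) \<bullet> y)"
    using twisted_rule [of c "x + y"] by (simp add: bullet_add_right V.scale_right_distrib)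
  have "scl M (c \<bullet> defect x y) = scl M (c \<bullet> \<Phi> (x + y)) - scl M (c \<bullet> \<Phi> x) - scl M (c \<bullet> \<Phi> y)"
    by (simp add: defect_def bullet_diff_right V.scale_right_diff_distrib)
  then show ?thesis
    unfolding defect_def sum twisted_rule [of c x] twisted_rule [of c y] by simp
qed

lemma defect_bullet_left: "defect (scl M (x \<bullet> c)) (scl M (y \<bullet> c)) = scl M (defect x y \<bullet> c)"
proof -
  have sum: "\<Phi> (scl M (x \<bullet> c) + scl M (y \<bullet> c)) = scl M (\<Phi> (x + y) \<bullet> c)
      + scl M (x \<bullet> \<Phi> c) + scl M (y \<bullet> \<Phi> c) + ((W \<bullet> x) \<bullet> c + (W \<bullet> y) \<bullet> c)"
    using twisted_rule [of "x + y" c]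
    by (simp add: bullet_add_left bullet_add_right V.scale_right_distrib)
  have "scl M (defect x y \<bullet> c) = scl M (\<Phi> (x + y) \<bullet> c) - scl M (\<Phi> x \<bullet> c) - scl M (\<Phi> y \<bullet> c)"
    by (simp add: defect_def bullet_diff_left V.scale_right_diff_distrib)
  then show ?thesis
    unfolding defect_def sum twisted_rule [of x c] twisted_rule [of y c] by simp
qed

lemma Phi_bullet_add_add:
  assumes "\<Phi> (x1 + x2) = \<Phi> x1 + \<Phi> x2" and "\<Phi> (y1 + y2) = \<Phi> y1 + \<Phi> y2"
  shows "\<Phi> (scl M ((x1 + x2) \<bullet> (y1 + y2))) = \<Phi> (scl M (x1 \<bullet> y1)) + \<Phi> (scl M (x1 \<bullet> y2))
     + \<Phi> (scl M (x2 \<bullet> y1)) + \<Phi> (scl M (x2 \<bullet> y2))"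
proof -
  have "\<Phi> (scl M ((x1 + x2) \<bullet> (y1 + y2))) = scl M ((\<Phi> x1 + \<Phi> x2) \<bullet> (y1 + y2))
     + scl M ((x1 + x2) \<bullet> (\<Phi> y1 + \<Phi> y2)) + (W \<bullet> (x1 + x2)) \<bullet> (y1 + y2)"
    using twisted_rule [of "x1 + x2" "y1 + y2"] assms by simp
  then show ?thesis
    using twisted_rule [of x1 y1] twisted_rule [of x1 y2] twisted_rule [of x2 y1]
      twisted_rule [of x2 y2]
    by (simp add: bullet_add_left bullet_add_right V.scale_right_distrib algebra_simps)
qed

end


locale peirce_twisted_derivation =
  twisted_bullet_derivation + peirce + prime_alternative_star_algebra +
  assumes p_nonzero: "p \<noteq> 0" and p_ne_one: "p \<noteq> one"
begin

lemma peirce_twisted_derivation_one_minus_p: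
  "peirce_twisted_derivation scl (\<odot>) st one \<Phi> M W (one - p)"
  using peirce_one_minus_p p_nonzero p_ne_one
  by (simp add: peirce_twisted_derivation_def peirce_twisted_derivation_axioms_def
      twisted_bullet_derivation_axioms prime_alternative_star_algebra_axioms)

lemma defect_11_22:
  assumes "A11 x" "A22 y"
  shows "defect x y = 0"
proof (rule double_eq_0)
  have "scl M (p \<bullet> defect x y) = 0" and "scl M ((one - p) \<bullet> defect x y) = 0"
    using defect_bullet_right [of p x y] defect_bullet_right [of "one - p" x y]
      bullet_p bullet_one_minus_p assms by simp_all
  then have "one \<bullet> defect x y = 0"
    using M_nonzero bullet_add_left [of p "one - p" "defect x y"] by simp
  then show "defect x y + defect x y = 0"
    by (simp add: one_bullet)
qed

lemma defect_12_21:
  assumes u: "A12 u" and v: "A21 v"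
  shows "defect u v = 0"
proof -
  define x where "x = scl (- \<i> / M) u"
  define y where "y = scl (\<i> / M) v"
  have x: "A12 x" and y: "A21 y"
    unfolding x_def y_def using A_scl(2) [OF u] A_scl(3) [OF v] .
  have "u = scl M (scl \<i> p \<bullet> x)" and "v = scl M (scl \<i> p \<bullet> y)"
    using bullet_i_p x y M_nonzero unfolding x_def y_def by simp_all
  then have "defect u v = scl M (scl \<i> p \<bullet> defect x y)"
    using defect_bullet_right by simp
  moreover have "defect x y \<bullet> p = 0" and "defect x y \<bullet> (one - p) = 0"
    using defect_bullet_left [of x p y] defect_bullet_left [of y "one - p" x] M_nonzero
      A12_bullet_p [OF x] A21_bullet_one_minus_p [OF y]
    by (simp_all add: defect_commute [of y])
  ultimately show ?thesis
    using bullet_i_p_eq_0 by simp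
qed

text \<open>Bullet products with \<open>p - (one - p)\<close> and with \<open>\<i> p\<close> annihilate the off-diagonal
  resp. the diagonal Peirce components; hence they annihilate the defect of \<open>a + d\<close> and \<open>b + c\<close>.\<close>

lemma Phi_peirce_sum:
  assumes a: "A11 a" and b: "A12 b" and c: "A21 c" and d: "A22 d"
  shows "\<Phi> (a + b + c + d) = \<Phi> a + \<Phi> b + \<Phi> c + \<Phi> d"
proof -
  let ?D = "defect (a + d) (b + c)"
  have diff: "(p - (one - p)) \<bullet> z = p \<bullet> z - (one - p) \<bullet> z" for z
    by (rule bullet_diff_left)
  have "(p - (one - p)) \<bullet> (b + c) = 0"
    unfolding diff using b c by (simp add: bullet_add_right bullet_p bullet_one_minus_p)
  then have "(p - (one - p)) \<bullet> ?D = 0"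
    using defect_bullet_right [of "p - (one - p)" "a + d" "b + c"] M_nonzero by simp
  moreover have "scl \<i> p \<bullet> (a + d) = 0"
    using a d by (simp add: bullet_add_right bullet_i_p)
  then have "scl \<i> p \<bullet> ?D = 0"
    using defect_bullet_right [of "scl \<i> p" "a + d" "b + c"] M_nonzero by simp
  ultimately have "?D = 0"
    by (rule eq_0_if_bullet_p_one_minus_p)
  then have "\<Phi> (a + b + c + d) = \<Phi> (a + d) + \<Phi> (b + c)"
    unfolding defect_eq_0_iff by (simp add: ac_simps)
  then show ?thesis
    using defect_11_22 [OF a d] defect_12_21 [OF b c] unfolding defect_eq_0_iff by simp
qed

lemma Phi_eq_sum_proj: "\<Phi> x = \<Phi> (proj11 x) + \<Phi> (proj12 x) + \<Phi> (proj21 x) + \<Phi> (proj22 x)"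
  using Phi_peirce_sum [OF A11_proj11 [of x] A12_proj12 [of x] A21_proj21 [of x] A22_proj22 [of x]]
  by (simp add: proj_sum)

lemma defect_12_12_in_A12:
  assumes x: "A12 x" and y: "A12 y"
  shows "A12 (defect x y)"
proof (rule A12_if_bullet)
  show "p \<bullet> defect x y = (one - p) \<bullet> defect x y"
    using defect_bullet_right [of p x y] defect_bullet_right [of "one - p" x y] x y M_nonzero
    by (simp add: bullet_p bullet_one_minus_p)
  show "defect x y \<bullet> p = 0"
    using defect_bullet_left [of x p y] A12_bullet_p [OF x] M_nonzero by simp
qed

lemma defect_21_21_in_A21: "A21 x \<Longrightarrow> A21 y \<Longrightarrow> A21 (defect x y)"
  using peirce_twisted_derivation.defect_12_12_in_A12 [OF peirce_twisted_derivation_one_minus_p]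
  by (simp add: peirce_one_minus_p_iff)

text \<open>Expand \<open>\<Phi> (M ((p + a) \<bullet> (b + (one - p))))\<close> once by biadditivity and once along the
  Peirce decomposition of the product.\<close>

lemma defect_12_12_scaled:
  assumes a: "A12 a" and b: "A12 b"
  shows "defect (scl M a) (scl M b) + defect (scl M (st a)) (scl M (a \<odot> b)) = 0"
proof -
  let ?K = "scl M"
  have sa: "A21 (st a)" and ab: "A21 (a \<odot> b)" and bsa: "A11 (b \<odot> st a)"
    using A_st(2) [OF a] A12_mul_A12 [OF a b] A12_mul_A21 [OF b A_st(2) [OF a]] by simp_all
  have prods: "p \<bullet> b = b" "p \<bullet> (one - p) = 0" "a \<bullet> b = a \<odot> b + b \<odot> st a"
    "a \<bullet> (one - p) = a + st a"
    using a b sa by (simp_all add: A_defs bullet_eq st_p p_idem)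
  have "\<Phi> (p + a) = \<Phi> p + \<Phi> a" "\<Phi> (b + (one - p)) = \<Phi> b + \<Phi> (one - p)"
    using Phi_peirce_sum [OF A11_p a A_zero(3) A_zero(4)]
      Phi_peirce_sum [OF A_zero(1) b A_zero(3), of "one - p"] by (simp_all add: A22_def p_idem)
  then have "\<Phi> (?K ((p + a) \<bullet> (b + (one - p)))) = \<Phi> (?K (p \<bullet> b)) + \<Phi> (?K (p \<bullet> (one - p)))
      + \<Phi> (?K (a \<bullet> b)) + \<Phi> (?K (a \<bullet> (one - p)))"
    by (rule Phi_bullet_add_add)
  moreover have "\<Phi> (?K (a \<odot> b + b \<odot> st a)) = \<Phi> (?K (a \<odot> b)) + \<Phi> (?K (b \<odot> st a))"
    using Phi_peirce_sum [OF A_scl(1) [OF bsa] A_zero(2) A_scl(3) [OF ab] A_zero(4)]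
    by (simp add: V.scale_right_distrib add.commute)
  moreover have "\<Phi> (?K (a + st a)) = \<Phi> (?K a) + \<Phi> (?K (st a))"
    using defect_12_21 [OF A_scl(2) [OF a] A_scl(3) [OF sa]]
    by (simp add: defect_eq_0_iff V.scale_right_distrib)
  moreover have "\<Phi> (?K ((p + a) \<bullet> (b + (one - p))))
      = \<Phi> (?K (b \<odot> st a)) + \<Phi> (?K a + ?K b) + \<Phi> (?K (st a) + ?K (a \<odot> b))"
  proof -
    have "(p + a) \<bullet> (b + (one - p)) = b \<odot> st a + (a + b) + (st a + a \<odot> b) + 0"
      by (simp only: bullet_add_left bullet_add_right prods) (simp add: algebra_simps)
    then show ?thesis
      using Phi_peirce_sum [OF A_scl(1) [OF bsa] A_add(2) [OF A_scl(2) [OF a] A_scl(2) [OF b]]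
          A_add(3) [OF A_scl(3) [OF sa] A_scl(3) [OF ab]] A_zero(4)]
      by (simp add: V.scale_right_distrib)
  qed
  ultimately show ?thesis
    using prods by (simp add: defect_def algebra_simps)
qed

lemma defect_12_12:
  assumes x: "A12 x" and y: "A12 y"
  shows "defect x y = 0"
proof -
  define a where "a = scl (1 / M) x"
  define b where "b = scl (1 / M) y"
  have a: "A12 a" and b: "A12 b"
    unfolding a_def b_def using A_scl(2) [OF x] A_scl(2) [OF y] .
  have "x = scl M a" and "y = scl M b"
    unfolding a_def b_def using M_nonzero by simp_all
  moreover have "A12 (defect (scl M a) (scl M b))"
    using defect_12_12_in_A12 [OF A_scl(2) [OF a] A_scl(2) [OF b]] .
  moreover have "A21 (defect (scl M (st a)) (scl M (a \<odot> b)))"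
    using defect_21_21_in_A21 [OF A_scl(3) [OF A_st(2) [OF a]] A_scl(3) [OF A12_mul_A12 [OF a b]]] .
  ultimately show ?thesis
    using A12_A21_sum_eq_0 defect_12_12_scaled [OF a b] by blast
qed

lemma defect_21_21: "A21 x \<Longrightarrow> A21 y \<Longrightarrow> defect x y = 0"
  using peirce_twisted_derivation.defect_12_12 [OF peirce_twisted_derivation_one_minus_p]
  by (simp add: peirce_one_minus_p_iff)

lemma Phi_add_12_21:
  assumes "A12 u1" "A12 u2" "A21 v1" "A21 v2"
  shows "\<Phi> ((u1 + v1) + (u2 + v2)) = \<Phi> (u1 + v1) + \<Phi> (u2 + v2)"
proof -
  have "\<Phi> ((u1 + u2) + (v1 + v2)) = \<Phi> (u1 + u2) + \<Phi> (v1 + v2)"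
    using defect_12_21 [OF A_add(2) A_add(3)] assms unfolding defect_eq_0_iff by blast
  then show ?thesis
    using assms defect_12_12 defect_21_21 defect_12_21 unfolding defect_eq_0_iff
    by (simp add: ac_simps)
qed

lemma defect_11_11_in_A11:
  assumes "A11 x" and "A11 y"
  shows "A11 (defect x y)"
proof (rule A11_if_bullet_one_minus_p_eq_0)
  show "(one - p) \<bullet> defect x y = 0"
    using defect_bullet_right [of "one - p" x y] assms M_nonzero by (simp add: bullet_one_minus_p)
qed

lemma defect_11_11_mul_A12:
  assumes x: "A11 x" and y: "A11 y" and a: "A12 a"
  shows "defect x y \<odot> a = 0"
proof -
  let ?c = "st a" and ?D = "defect x y"
  have c: "A21 ?c"
    using A_st(2) [OF a] .
  have "scl M (?c \<bullet> z) = scl M (z \<odot> a) + scl M (?c \<odot> z)" for z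
    by (simp add: bullet_eq V.scale_right_distrib add.commute)
  then have "scl M (?c \<bullet> ?D) = defect (scl M (x \<odot> a) + scl M (?c \<odot> x)) (scl M (y \<odot> a) + scl M (?c \<odot> y))"
    using defect_bullet_right [of ?c x y] by simp
  also have "\<dots> = 0"
    unfolding defect_eq_0_iff
    by (intro Phi_add_12_21 A_scl A11_mul_A12 [OF x a] A11_mul_A12 [OF y a]
        A21_mul_A11 [OF c x] A21_mul_A11 [OF c y])
  finally have "?c \<odot> ?D + ?D \<odot> a = 0"
    using M_nonzero by (simp add: bullet_eq)
  moreover have "A21 (?c \<odot> ?D)" and "A12 (?D \<odot> a)"
    using A21_mul_A11 [OF c] A11_mul_A12 [OF _ a] defect_11_11_in_A11 [OF x y] by simp_all
  ultimately show ?thesis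
    using A12_A21_sum_eq_0 [of "?D \<odot> a" "?c \<odot> ?D"] by (simp add: add.commute)
qed

lemma defect_11_11:
  assumes x: "A11 x" and y: "A11 y"
  shows "defect x y = 0"
proof -
  let ?D = "defect x y"
  have D: "A11 ?D"
    using defect_11_11_in_A11 [OF x y] .
  have "(?D \<odot> z) \<odot> (one - p) = 0" for z
  proof -
    have "?D \<odot> z = ?D \<odot> proj11 z + ?D \<odot> proj12 z + ?D \<odot> proj21 z + ?D \<odot> proj22 z"
      using proj_sum [of z] mul_add_right by metis
    then have "?D \<odot> z = ?D \<odot> proj11 z"
      using defect_11_11_mul_A12 [OF x y A12_proj12] A11_mul_A21 [OF D A21_proj21]
        A11_mul_A22 [OF D A22_proj22] by simp
    then show ?thesis
      using A11_mul_A11 [OF D A11_proj11] by (simp add: A11_def)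
  qed
  then have "?D = 0 \<or> one - p = 0"
    by (rule prime)
  then show ?thesis
    using p_ne_one by simp
qed

lemma defect_22_22: "A22 x \<Longrightarrow> A22 y \<Longrightarrow> defect x y = 0"
  using peirce_twisted_derivation.defect_11_11 [OF peirce_twisted_derivation_one_minus_p]
  by (simp add: peirce_one_minus_p_iff)

theorem Phi_add: "\<Phi> (x + y) = \<Phi> x + \<Phi> y"
proof -
  have "\<Phi> (x + y) = \<Phi> (proj11 x + proj11 y) + \<Phi> (proj12 x + proj12 y) + \<Phi> (proj21 x + proj21 y)
      + \<Phi> (proj22 x + proj22 y)"
    using Phi_eq_sum_proj [of "x + y"] by (simp add: proj_add)
  also have "\<dots> = \<Phi> x + \<Phi> y"
    using defect_11_11 [OF A11_proj11 A11_proj11] defect_12_12 [OF A12_proj12 A12_proj12]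
      defect_21_21 [OF A21_proj21 A21_proj21] defect_22_22 [OF A22_proj22 A22_proj22]
      Phi_eq_sum_proj [of x] Phi_eq_sum_proj [of y]
    by (simp add: defect_eq_0_iff algebra_simps)
  finally show ?thesis .
qed

lemma Phi_scl_of_nat: "\<Phi> (scl (of_nat k) x) = scl (of_nat k) (\<Phi> x)"
  by (induction k) (simp_all add: V.scale_left_distrib Phi_add)

lemma Phi_one_skew_and_bullet_eq_0:
  assumes M: "M = of_nat m" and W: "W + st W = scl (of_nat k) (\<Phi> one + st (\<Phi> one))"
  shows "st (\<Phi> one) = - \<Phi> one" and "\<Phi> one \<bullet> x = 0"
proof -
  let ?d = "\<Phi> one"
  have M_real: "cnj M = M"
    using M by simp
  have vanish: "(scl M ?d + (W + st W)) \<bullet> x = 0" for x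
  proof -
    have "scl M (\<Phi> x + \<Phi> x) = scl M (?d \<bullet> x) + scl M (\<Phi> x + \<Phi> x) + (W + st W) \<bullet> x"
      using twisted_rule [of one x] M by (simp add: one_bullet bullet_one Phi_add Phi_scl_of_nat)
    then show ?thesis
      using bullet_real_scl_left [OF M_real] by (simp add: bullet_add_left)
  qed
  have "scl (M + of_nat k + of_nat k) (?d + st ?d)
      = scl M (?d + st ?d) + scl (of_nat k) (?d + st ?d) + scl (of_nat k) (?d + st ?d)"
    by (simp only: V.scale_left_distrib)
  also have "\<dots> = (scl M ?d + (W + st W)) \<bullet> one"
    using W M_real by (simp add: bullet_one st_add st_scl V.scale_right_distrib ac_simps)
  finally have "scl (M + of_nat k + of_nat k) (?d + st ?d) = 0"
    using vanish by simp
  moreover have "M + of_nat k + of_nat k \<noteq> 0"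
    using M M_nonzero by (metis of_nat_add of_nat_eq_0_iff add_eq_0_iff_both_eq_0)
  ultimately have sum: "?d + st ?d = 0"
    by simp
  then show "st ?d = - ?d"
    by (simp add: eq_neg_iff_add_eq_0 add.commute)
  have "scl M (?d \<bullet> x) = 0"
    using vanish [of x] W sum bullet_real_scl_left [OF M_real] by simp
  then show "?d \<bullet> x = 0"
    using M_nonzero by simp
qed

lemma Phi_bullet_if_W_annihilates:
  assumes M: "M = of_nat m" and W: "\<And>a. W \<bullet> a = 0"
  shows "\<Phi> (a \<bullet> b) = \<Phi> a \<bullet> b + a \<bullet> \<Phi> b"
  using twisted_rule [of a b] M M_nonzero W
  by (simp add: Phi_scl_of_nat V.scale_right_distrib [symmetric])

end

section \<open>Derivations of the bullet product\<close>

locale bullet_derivation = peirce + prime_alternative_star_algebra +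
  fixes \<Phi> :: "'a \<Rightarrow> 'a"
  assumes p_nonzero: "p \<noteq> 0" and p_ne_one: "p \<noteq> one"
    and Phi_add: "\<Phi> (x + y) = \<Phi> x + \<Phi> y"
    and Phi_bullet: "\<Phi> (a \<bullet> b) = \<Phi> a \<bullet> b + a \<bullet> \<Phi> b"
begin

lemma bullet_derivation_one_minus_p: "bullet_derivation scl (\<odot>) st one (one - p) \<Phi>"
  using peirce_one_minus_p p_nonzero p_ne_one Phi_add Phi_bullet prime_alternative_star_algebra_axioms
  by (simp add: bullet_derivation_def bullet_derivation_axioms_def)

lemma Phi_zero [simp]: "\<Phi> 0 = 0"
  using Phi_add [of 0 0] by simp

lemma Phi_minus: "\<Phi> (- x) = - \<Phi> x"
  using Phi_add [of x "- x"] by (simp add: eq_neg_iff_add_eq_0 add.commute)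

lemma Phi_diff: "\<Phi> (x - y) = \<Phi> x - \<Phi> y"
  using Phi_add [of x "- y"] by (simp add: Phi_minus)

lemma Phi_one_bullet: "\<Phi> one \<bullet> x = 0"
  using Phi_bullet [of one x] by (simp add: one_bullet Phi_add)

lemma Phi_i_one_bullet: "\<Phi> (scl \<i> one) \<bullet> x = 0"
proof -
  have "scl \<i> one \<bullet> y = 0" for y
    by (simp add: bullet_eq st_scl mul_scl_left mul_scl_right)
  then show ?thesis
    using Phi_bullet [of "scl \<i> one" x] by simp
qed

lemma Phi_one_skew: "st (\<Phi> one) = - \<Phi> one"
  and Phi_one_central: "\<Phi> one \<odot> x = x \<odot> \<Phi> one"
  using bullet_annihilator [OF Phi_one_bullet] by blast+

lemma Phi_i_one_skew: "st (\<Phi> (scl \<i> one)) = - \<Phi> (scl \<i> one)"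
  and Phi_i_one_central: "\<Phi> (scl \<i> one) \<odot> x = x \<odot> \<Phi> (scl \<i> one)"
  using bullet_annihilator [OF Phi_i_one_bullet] by blast+

definition w :: 'a
  where "w = \<Phi> (scl \<i> one) - scl \<i> (\<Phi> one)"

lemma w_central: "w \<odot> x = x \<odot> w"
  using Phi_i_one_central [of x] Phi_one_central [of x] by (simp add: w_def mul_scl_left mul_scl_right)

lemma w_plus_st_w: "w + st w = - scl \<i> (\<Phi> one + \<Phi> one)"
  using Phi_i_one_skew Phi_one_skew by (simp add: w_def st_scl V.scale_right_distrib)

lemma Phi_st_correction: "\<Phi> (st y) = st (\<Phi> y) + \<Phi> one \<odot> y + \<Phi> one \<odot> st y"
proof -
  have "\<Phi> y + \<Phi> (st y) = \<Phi> y + st (\<Phi> y) + (\<Phi> one \<odot> y + \<Phi> one \<odot> st y)"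
    using Phi_bullet [of y one] Phi_one_central [of y] by (simp add: bullet_one bullet_eq [of y] Phi_add)
  then show ?thesis
    by (simp add: algebra_simps)
qed

lemma Phi_i_hermitian: "\<Phi> (scl \<i> (y + st y)) = scl \<i> (\<Phi> (y + st y)) + w \<odot> (y + st y)"
proof -
  have "\<Phi> (scl \<i> (y + st y)) = scl \<i> (\<Phi> y + st (\<Phi> y)) + (\<Phi> (scl \<i> one) \<odot> y + \<Phi> (scl \<i> one) \<odot> st y)"
    using Phi_bullet [of y "scl \<i> one"] Phi_i_one_central [of y]
    by (simp add: bullet_eq mul_scl_left mul_scl_right V.scale_right_distrib)
  also have "\<Phi> y + st (\<Phi> y) = \<Phi> (y + st y) - (\<Phi> one \<odot> y + \<Phi> one \<odot> st y)"
    using Phi_st_correction [of y] by (simp add: Phi_add algebra_simps)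
  finally show ?thesis
    by (simp add: w_def mul_scl_left mul_add_left mul_add_right algebra_simps)
qed

text \<open>Apply \<open>Phi_i_hermitian\<close> to \<open>u\<close> and to \<open>-\<i> u\<close> and solve for \<open>\<Phi> (\<i> u)\<close>.\<close>

lemma Phi_i_correction: "\<Phi> (scl \<i> u) = scl \<i> (\<Phi> u) + w \<odot> st u"
proof -
  let ?A = "\<Phi> (scl \<i> u)" and ?B = "\<Phi> (scl \<i> (st u))" and ?P = "\<Phi> u" and ?Q = "\<Phi> (st u)"
    and ?X = "w \<odot> u" and ?Y = "w \<odot> st u"
  have sum: "?A + ?B = scl \<i> ?P + scl \<i> ?Q + ?X + ?Y"
    using Phi_i_hermitian [of u] by (simp add: Phi_add V.scale_right_distrib mul_add_right algebra_simps)
  have "scl \<i> (scl (- \<i>) u + st (scl (- \<i>) u)) = u - st u"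
    by (simp add: st_scl V.scale_right_distrib V.scale_right_diff_distrib)
  then have "\<Phi> (u - st u) = scl \<i> (\<Phi> (scl (- \<i>) u + st (scl (- \<i>) u))) + w \<odot> (scl (- \<i>) u + st (scl (- \<i>) u))"
    using Phi_i_hermitian [of "scl (- \<i>) u"] by simp
  moreover have "\<Phi> (scl (- \<i>) u) = - ?A"
    using Phi_minus [of "scl \<i> u"] by simp
  ultimately have "?P - ?Q = scl \<i> (- ?A + ?B) + scl (- \<i>) ?X + scl \<i> ?Y"
    by (simp add: Phi_diff Phi_add st_scl mul_add_right mul_scl_right V.scale_right_distrib)
  then have "scl \<i> (?P - ?Q) = scl \<i> (scl \<i> (- ?A + ?B) + scl (- \<i>) ?X + scl \<i> ?Y)"
    by simp
  then have diff: "?A - ?B + ?X - ?Y = scl \<i> ?P - scl \<i> ?Q"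
    by (simp add: algebra_simps)
  have "?A + ?A = (?A + ?B) + (?A - ?B + ?X - ?Y) - ?X + ?Y"
    by (simp add: algebra_simps)
  also have "\<dots> = (scl \<i> ?P + ?Y) + (scl \<i> ?P + ?Y)"
    unfolding sum diff by (simp add: algebra_simps)
  finally show ?thesis
    by (rule double_cancel)
qed

lemma Phi_p_st: "st (\<Phi> p) = \<Phi> p - (\<Phi> one \<odot> p + \<Phi> one \<odot> p)"
  using Phi_st_correction [of p] st_p by (simp add: algebra_simps)

lemma Phi_p_peirce: "\<Phi> p = \<Phi> p \<odot> p + p \<odot> \<Phi> p - \<Phi> one \<odot> p"
proof (rule double_cancel)
  have "\<Phi> p + \<Phi> p = \<Phi> (p \<bullet> p)"
    by (simp add: bullet_eq st_p p_idem Phi_add)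
  also have "\<dots> = \<Phi> p \<odot> p + p \<odot> st (\<Phi> p) + p \<odot> \<Phi> p + \<Phi> p \<odot> p"
    using Phi_bullet [of p p] by (simp only: bullet_eq st_p add.assoc)
  also have "\<dots> = (\<Phi> p \<odot> p + p \<odot> \<Phi> p - \<Phi> one \<odot> p) + (\<Phi> p \<odot> p + p \<odot> \<Phi> p - \<Phi> one \<odot> p)"
    using Phi_one_central [of p] by (simp add: Phi_p_st mul_add_right algebra_simps)
  finally show "\<Phi> p + \<Phi> p = \<dots>" .
qed

lemma proj12_A12_mul_st_Phi_p:
  assumes a: "A12 a"
  shows "proj12 (a \<odot> st (\<Phi> p)) = 0"
proof -
  have "a \<odot> (\<Phi> one \<odot> p) = \<Phi> one \<odot> (a \<odot> p)"
    using central_assoc [OF Phi_one_central, of a p] Phi_one_central [of a]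
      central_assoc(3) [OF Phi_one_central, of a p] by simp
  then have "a \<odot> (\<Phi> one \<odot> p) = 0"
    using a by (simp add: A12_def)
  then have "a \<odot> st (\<Phi> p) = a \<odot> (\<Phi> p \<odot> p) + a \<odot> (p \<odot> \<Phi> p)"
    by (subst Phi_p_st, subst Phi_p_peirce) (simp add: mul_add_right)
  then show ?thesis
    using proj12_A12_mul_mul_p [OF a] proj12_A12_mul_p_mul [OF a] by (simp add: proj_add)
qed

lemma Phi_A12:
  assumes "A12 a"
  shows "\<Phi> a = \<Phi> p \<odot> a + a \<odot> st (\<Phi> p) + p \<odot> \<Phi> a + \<Phi> a \<odot> p"
  using Phi_bullet [of p a] bullet_p(2) [OF assms] by (simp add: bullet_eq st_p add.assoc)

lemma Phi_i_A12:
  assumes a: "A12 a"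
  shows "scl \<i> (\<Phi> a) + w \<odot> st a = scl \<i> (\<Phi> p \<odot> a) - scl \<i> (a \<odot> st (\<Phi> p)) + w \<odot> a
    + scl \<i> (p \<odot> \<Phi> a) - scl \<i> (\<Phi> a \<odot> p)"
proof -
  have "(w \<odot> p) \<bullet> a = w \<odot> a"
  proof -
    have "a \<odot> st (w \<odot> p) = (a \<odot> p) \<odot> st w"
      using central_assoc(1) [OF central_st [OF w_central], of a p] by (simp add: st_mul st_p)
    then show ?thesis
      using central_assoc(3) [OF w_central, of p a] a by (simp add: bullet_eq A12_def)
  qed
  moreover have "scl \<i> (\<Phi> p) \<bullet> a = scl \<i> (\<Phi> p \<odot> a) - scl \<i> (a \<odot> st (\<Phi> p))"
    and "scl \<i> p \<bullet> \<Phi> a = scl \<i> (p \<odot> \<Phi> a) - scl \<i> (\<Phi> a \<odot> p)"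
    by (simp_all add: bullet_eq st_p st_scl mul_scl_left mul_scl_right)
  moreover have "scl \<i> (\<Phi> a) + w \<odot> st a = (scl \<i> (\<Phi> p) \<bullet> a + (w \<odot> p) \<bullet> a) + scl \<i> p \<bullet> \<Phi> a"
    using Phi_i_correction [of a] Phi_bullet [of "scl \<i> p" a] bullet_i_p(2) [OF a] Phi_i_correction [of p]
    by (simp add: st_p bullet_add_left)
  ultimately show ?thesis
    by (simp add: algebra_simps)
qed

lemma w_mul_A12:
  assumes a: "A12 a"
  shows "w \<odot> a = 0"
proof -
  have "scl \<i> (\<Phi> a) = scl \<i> (\<Phi> p \<odot> a) + scl \<i> (a \<odot> st (\<Phi> p)) + scl \<i> (p \<odot> \<Phi> a) + scl \<i> (\<Phi> a \<odot> p)"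
    using arg_cong [OF Phi_A12 [OF a], of "scl \<i>"] by (simp add: V.scale_right_distrib)
  with Phi_i_A12 [OF a]
  have "w \<odot> a = w \<odot> st a + scl \<i> (a \<odot> st (\<Phi> p) + a \<odot> st (\<Phi> p) + \<Phi> a \<odot> p + \<Phi> a \<odot> p)"
    by (simp add: algebra_simps)
  then have "proj12 (w \<odot> a) = proj12 (w \<odot> st a)
      + scl \<i> (proj12 (a \<odot> st (\<Phi> p)) + proj12 (a \<odot> st (\<Phi> p)) + proj12 (\<Phi> a \<odot> p) + proj12 (\<Phi> a \<odot> p))"
    by (simp add: proj_add proj_scl)
  moreover have "proj12 (w \<odot> a) = w \<odot> a" and "proj12 (w \<odot> st a) = 0"
    using proj_A12 [OF central_mul_A12 [OF w_central a]]
      proj_A21 [OF central_mul_A21 [OF w_central A_st(2) [OF a]]] by simp_all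
  ultimately show ?thesis
    using proj12_A12_mul_st_Phi_p [OF a] proj12_mul_p by simp
qed

lemma w_mul_p: "w \<odot> p = 0"
proof -
  have "((w \<odot> p) \<odot> x) \<odot> (one - p) = 0" for x
  proof -
    have "((w \<odot> p) \<odot> x) \<odot> (one - p) = w \<odot> ((p \<odot> x) \<odot> (one - p))"
      using central_assoc(3) [OF w_central, of p x] central_assoc(3) [OF w_central, of "p \<odot> x" "one - p"]
      by simp
    also have "(p \<odot> x) \<odot> (one - p) = proj12 x"
      by (simp add: proj12_def)
    finally show ?thesis
      using w_mul_A12 [OF A12_proj12] by simp
  qed
  then have "w \<odot> p = 0 \<or> one - p = 0"
    by (rule prime)
  then show ?thesis
    using p_ne_one by simp
qed

lemma w_eq_0: "w = 0"
proof -
  have "w \<odot> (one - p) = 0"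
    using bullet_derivation.w_mul_p [OF bullet_derivation_one_minus_p] .
  then show ?thesis
    using w_mul_p by simp
qed

lemma Phi_one_eq_0: "\<Phi> one = 0"
proof -
  have "scl \<i> (\<Phi> one + \<Phi> one) = 0"
    using w_plus_st_w w_eq_0 by simp
  then have "\<Phi> one + \<Phi> one = 0"
    by simp
  then show ?thesis
    by (rule double_eq_0)
qed

lemma Phi_st: "\<Phi> (st y) = st (\<Phi> y)"
  using Phi_st_correction [of y] Phi_one_eq_0 by simp

lemma Phi_i: "\<Phi> (scl \<i> u) = scl \<i> (\<Phi> u)"
  using Phi_i_correction [of u] w_eq_0 by simp

lemma Phi_mul: "\<Phi> (x \<odot> y) = \<Phi> x \<odot> y + x \<odot> \<Phi> y"
proof -
  have two_prod: "a \<odot> b + a \<odot> b = a \<bullet> b - scl \<i> (scl \<i> a \<bullet> b)" for a b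
    by (simp add: bullet_eq st_scl mul_scl_left mul_scl_right V.scale_right_diff_distrib)
  have "\<Phi> (x \<odot> y) + \<Phi> (x \<odot> y) = \<Phi> (x \<odot> y + x \<odot> y)"
    by (simp add: Phi_add)
  also have "\<dots> = \<Phi> (x \<bullet> y) - scl \<i> (\<Phi> (scl \<i> x \<bullet> y))"
    by (simp only: two_prod Phi_diff Phi_i)
  also have "\<dots> = (\<Phi> x \<bullet> y - scl \<i> (scl \<i> (\<Phi> x) \<bullet> y)) + (x \<bullet> \<Phi> y - scl \<i> (scl \<i> x \<bullet> \<Phi> y))"
    by (simp add: Phi_bullet Phi_i V.scale_right_distrib algebra_simps)
  also have "\<dots> = (\<Phi> x \<odot> y + x \<odot> \<Phi> y) + (\<Phi> x \<odot> y + x \<odot> \<Phi> y)"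
    by (simp only: two_prod [symmetric]) (simp add: algebra_simps)
  finally show ?thesis
    by (rule double_cancel)
qed

theorem star_derivation: "star_derivation (\<odot>) st \<Phi>"
  using Phi_add Phi_mul Phi_st by (simp add: star_derivation_def)

end

section \<open>Products with leading units\<close>

context alternative_star_algebra
begin

lemma st_sum: "st (\<Sum>k<(N::nat). f k) = (\<Sum>k<N. st (f k))"
  by (induction N) (simp_all add: st_add)

lemma bullet_sum_left: "(\<Sum>k<(N::nat). f k) \<bullet> b = (\<Sum>k<N. f k \<bullet> b)"
  by (induction N) (simp_all add: bullet_add_left)

lemma sum_scl_const: "(\<Sum>k<(N::nat). scl c v) = scl (of_nat N * c) v"
  by (induction N) (simp_all add: V.scale_left_distrib algebra_simps)

lemma scl_double: "scl (2 * c) x = scl c x + scl c x"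
  by (simp only: mult_2 V.scale_left_distrib)

lemma foldl_bullet_units_Suc:
  "foldl (\<bullet>) x (replicate (Suc j) one) = foldl (\<bullet>) (x + st x) (replicate j one)"
  by (simp add: bullet_one)

lemma foldl_bullet_units_zero: "foldl (\<bullet>) 0 (replicate j one) = 0"
  by (induction j) (simp_all add: bullet_one)

lemma foldl_bullet_units_self_adjoint:
  "st x = x \<Longrightarrow> foldl (\<bullet>) x (replicate j one) = scl (of_nat (2 ^ j)) x"
proof (induction j arbitrary: x)
  case 0
  then show ?case by simp
next
  case (Suc j)
  then have "foldl (\<bullet>) (x + x) (replicate j one) = scl (of_nat (2 ^ j)) (x + x)"
    by (simp add: st_add)
  with Suc.prems show ?case
    unfolding foldl_bullet_units_Suc by (simp add: V.scale_right_distrib scl_double)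
qed

lemma foldl_bullet_units_plus_st:
  "foldl (\<bullet>) x (replicate j one) + st (foldl (\<bullet>) x (replicate j one))
    = scl (of_nat (2 ^ j)) (x + st x)"
proof (induction j arbitrary: x)
  case 0
  then show ?case by simp
next
  case (Suc j)
  show ?case
    unfolding foldl_bullet_units_Suc Suc.IH
    by (simp add: st_add V.scale_right_distrib scl_double algebra_simps)
qed

lemma foldl_bullet_units_skew: "st x = - x \<Longrightarrow> foldl (\<bullet>) x (replicate (Suc j) one) = 0"
  unfolding foldl_bullet_units_Suc by (simp add: foldl_bullet_units_zero)

lemma jbullet_list_units:
  "jbullet_list (\<odot>) st (replicate N one @ [a, b]) = scl (of_nat (2 ^ N)) (a \<bullet> b)"
proof (cases N)
  case 0
  then show ?thesis by (simp add: jbullet_list_def)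
next
  case (Suc N')
  then have "jbullet_list (\<odot>) st (replicate N one @ [a, b])
      = (scl (of_nat (2 ^ N')) one \<bullet> a) \<bullet> b"
    by (simp add: jbullet_list_def foldl_bullet_units_self_adjoint)
  then show ?thesis
    using Suc by (simp add: bullet_add_left bullet_real_scl_left one_bullet V.scale_right_distrib
        scl_double)
qed

lemma jbullet_list_units_update:
  assumes "k < N"
  shows "jbullet_list (\<odot>) st ((replicate N one @ [a, b])[k := d])
    = (foldl (\<bullet>) (scl (of_nat (2 ^ k)) d) (replicate (N - 1 - k) one) \<bullet> a) \<bullet> b"
proof -
  have "replicate N one = replicate k one @ one # replicate (N - 1 - k) one"
    using assms by (simp add: replicate_add [symmetric] flip: replicate_Suc)
  then have xs: "(replicate N one @ [a, b])[k := d] = replicate k one @ d # replicate (N - 1 - k) one @ [a, b]"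
    by (simp add: list_update_append)
  show ?thesis
  proof (cases k)
    case 0
    then show ?thesis
      unfolding xs by (simp add: jbullet_list_def)
  next
    case (Suc k')
    then have "foldl (\<bullet>) one (replicate k' one) \<bullet> d = scl (of_nat (2 ^ k)) d"
      by (simp add: foldl_bullet_units_self_adjoint bullet_real_scl_left one_bullet
          V.scale_right_distrib scl_double)
    with Suc show ?thesis
      unfolding xs by (simp add: jbullet_list_def)
  qed
qed

text \<open>The \<open>k\<close>-th summand is the product of \<open>N\<close> units in which the \<open>k\<close>-th one is
  replaced by \<open>d\<close>.\<close>

definition unit_correction :: "nat \<Rightarrow> 'a \<Rightarrow> 'a"
  where "unit_correction N d = (\<Sum>k<N. foldl (\<bullet>) (scl (of_nat (2 ^ k)) d) (replicate (N - 1 - k) one))"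

lemma unit_correction_plus_st:
  "unit_correction N d + st (unit_correction N d) = scl (of_nat (N * 2 ^ (N - 1))) (d + st d)"
proof -
  have "foldl (\<bullet>) (scl (of_nat (2 ^ k)) d) (replicate (N - 1 - k) one)
      + st (foldl (\<bullet>) (scl (of_nat (2 ^ k)) d) (replicate (N - 1 - k) one))
      = scl (of_nat (2 ^ (N - 1))) (d + st d)" if "k < N" for k
  proof -
    have "(2::complex) ^ (N - 1 - k) * 2 ^ k = 2 ^ (N - 1)"
      using that by (simp flip: power_add)
    then show ?thesis
      unfolding foldl_bullet_units_plus_st by (simp add: st_scl V.scale_right_distrib)
  qed
  then show ?thesis
    unfolding unit_correction_def st_sum sum.distrib [symmetric]
    by (simp add: sum_scl_const)
qed

lemma bullet_unit_correction_eq_0: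
  assumes skew: "st d = - d" and annihilates: "\<And>x. d \<bullet> x = 0"
  shows "unit_correction N d \<bullet> a = 0"
proof -
  have "foldl (\<bullet>) (scl (of_nat (2 ^ k)) d) (replicate (N - 1 - k) one) \<bullet> a = 0" for k
  proof (cases "N - 1 - k")
    case 0
    then show ?thesis
      using annihilates by (simp add: bullet_real_scl_left)
  next
    case (Suc j)
    have "st (scl (of_nat (2 ^ k)) d) = - scl (of_nat (2 ^ k)) d"
      using skew by (simp add: st_scl)
    with Suc show ?thesis
      using foldl_bullet_units_skew by simp
  qed
  then show ?thesis
    unfolding unit_correction_def bullet_sum_left by simp
qed

lemma twisted_rule_if_unit_product_rule:
  fixes \<Phi> :: "'a \<Rightarrow> 'a"
  assumes n: "2 \<le> n"
    and hyp: "\<And>a b. let xs = replicate (n - 2) one @ [a, b] in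
      \<Phi> (jbullet_list (\<odot>) st xs) = (\<Sum>k<n. jbullet_list (\<odot>) st (xs[k := \<Phi> (xs ! k)]))"
  shows "\<Phi> (scl (of_nat (2 ^ (n - 2))) (a \<bullet> b)) = scl (of_nat (2 ^ (n - 2))) (\<Phi> a \<bullet> b)
    + scl (of_nat (2 ^ (n - 2))) (a \<bullet> \<Phi> b) + (unit_correction (n - 2) (\<Phi> one) \<bullet> a) \<bullet> b"
proof -
  define N where "N = n - 2"
  let ?xs = "replicate N one @ [a, b]"
  have n_eq: "n = N + 2"
    using n by (simp add: N_def)
  have "(\<Sum>k<N. jbullet_list (\<odot>) st (?xs[k := \<Phi> (?xs ! k)]))
      = (\<Sum>k<N. (foldl (\<bullet>) (scl (of_nat (2 ^ k)) (\<Phi> one)) (replicate (N - 1 - k) one) \<bullet> a) \<bullet> b)"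
    by (rule sum.cong) (simp_all add: nth_append jbullet_list_units_update)
  also have "\<dots> = (unit_correction N (\<Phi> one) \<bullet> a) \<bullet> b"
    by (simp add: unit_correction_def bullet_sum_left)
  finally have units: "(\<Sum>k<N. jbullet_list (\<odot>) st (?xs[k := \<Phi> (?xs ! k)]))
      = (unit_correction N (\<Phi> one) \<bullet> a) \<bullet> b" .
  have "?xs[N := \<Phi> (?xs ! N)] = replicate N one @ [\<Phi> a, b]"
    and "?xs[Suc N := \<Phi> (?xs ! Suc N)] = replicate N one @ [a, \<Phi> b]"
    by (simp_all add: list_update_append nth_append)
  then show ?thesis
    using hyp [of a b] units unfolding N_def [symmetric] n_eq Let_def
    by (simp add: jbullet_list_units algebra_simps)
qed

end

theorem corollary2:
  fixes scl :: "complex \<Rightarrow> 'a::ab_group_add \<Rightarrow> 'a"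
    and mul :: "'a \<Rightarrow> 'a \<Rightarrow> 'a"
    and st :: "'a \<Rightarrow> 'a"
    and one :: 'a
    and e :: 'a
    and \<Phi> :: "'a \<Rightarrow> 'a"
    and n :: nat
  assumes alg: "complex_star_algebra scl mul st"
    and alt: "alternative mul"
    and prime: "prime_algebra mul"
    and unit: "unit_of mul one"
    and n2: "n \<ge> 2"
    and e_idem: "mul e e = e"
    and e_sym: "st e = e"
    and e_nz: "e \<noteq> 0"
    and e_ne1: "e \<noteq> one"
    and hyp: "\<And>a b. let xs = replicate (n - 2) one @ [a, b] in
               \<Phi> (jbullet_list mul st xs) =
               (\<Sum>k<n. jbullet_list mul st (xs[k := \<Phi> (xs ! k)]))"
  shows "star_derivation mul st \<Phi>"
proof -
  interpret A: prime_alternative_star_algebra scl mul st one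
    using alg alt prime unit by (rule prime_alternative_star_algebraI)
  define M :: complex where "M = of_nat (2 ^ (n - 2))"
  define W where "W = A.unit_correction (n - 2) (\<Phi> one)"
  interpret T: peirce_twisted_derivation scl mul st one \<Phi> M W e
    using A.twisted_rule_if_unit_product_rule [OF n2 hyp] e_idem e_sym e_nz e_ne1
    by unfold_locales (simp_all add: M_def W_def)
  have W_sym: "W + st W = scl (of_nat ((n - 2) * 2 ^ (n - 2 - 1))) (\<Phi> one + st (\<Phi> one))"
    unfolding W_def by (rule A.unit_correction_plus_st)
  have "jbullet mul st W a = 0" for a
    unfolding W_def using T.Phi_one_skew_and_bullet_eq_0 [OF M_def W_sym]
    by (rule A.bullet_unit_correction_eq_0)
  then interpret B: bullet_derivation scl mul st one e \<Phi>
    using T.Phi_add T.Phi_bullet_if_W_annihilates [OF M_def] e_nz e_ne1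
    by unfold_locales simp_all
  show ?thesis
    by (rule B.star_derivation)
qed

end
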